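(* Let $\langle B,\wedge,{}'\rangle$ be an algebra with $\wedge$ binary and ${}'$ unary satisfying $x\wedge(y\wedge z)\approx z\wedge(y\wedge x)$, $x''\approx x$, and $x'\approx (x\wedge y)'\wedge(x\wedge y')'$. Then $x\wedge y=y\wedge x$ for all $x,y\in B$. *)

theory Defs
  imports Main
begin

end

theory Submission
  imports Defs
begin

text \<open>
  Writing \<open>x \<cdot> y\<close> for the meet and \<open>c x\<close> for the complement: by the third axiom the two
  factors \<open>c (x \<cdot> y)\<close> and \<open>c (x \<cdot> c y)\<close> meet to \<open>c x\<close> in either order, so the rotation
  axiom \<open>x \<cdot> (y \<cdot> z) = z \<cdot> (y \<cdot> x)\<close> can insert or remove such a pair.  Expanding
  \<open>x \<cdot> y = c (c (x \<cdot> y))\<close> in this way shows first that every element commutes with the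
  meets it is a factor of, and then that \<open>c y\<close> commutes with every \<open>x \<cdot> c (y \<cdot> z)\<close>.  Applied
  to the decomposition \<open>c x = c (x \<cdot> c (y \<cdot> y)) \<cdot> c (y \<cdot> (y \<cdot> x))\<close> this makes any two
  complements commute, and since every element is a complement, any two elements commute.
\<close>

text \<open>The last axiom is Huntington's equation \<open>c (c x + y) + c (c x + c y) = x\<close>, dualised and
  with \<open>c x\<close> in place of \<open>x\<close>.\<close>

locale huntington_meet_algebra =
  fixes B :: "'a set" and meet :: "'a \<Rightarrow> 'a \<Rightarrow> 'a" (infixl "\<cdot>" 70) and c :: "'a \<Rightarrow> 'a"
  assumes closed_meet [simp]: "x \<in> B \<Longrightarrow> y \<in> B \<Longrightarrow> x \<cdot> y \<in> B"
    and closed_c [simp]: "x \<in> B \<Longrightarrow> c x \<in> B"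
    and meet_rotate: "x \<in> B \<Longrightarrow> y \<in> B \<Longrightarrow> z \<in> B \<Longrightarrow> x \<cdot> (y \<cdot> z) = z \<cdot> (y \<cdot> x)"
    and c_c [simp]: "x \<in> B \<Longrightarrow> c (c x) = x"
    and huntington: "x \<in> B \<Longrightarrow> y \<in> B \<Longrightarrow> c x = c (x \<cdot> y) \<cdot> c (x \<cdot> c y)"
begin

lemma huntington_commuted: "x \<in> B \<Longrightarrow> y \<in> B \<Longrightarrow> c (x \<cdot> c y) \<cdot> c (x \<cdot> y) = c x"
  using huntington[of x "c y"] by simp

lemma huntington_meet:
  "x \<in> B \<Longrightarrow> y \<in> B \<Longrightarrow> z \<in> B \<Longrightarrow> c (x \<cdot> c y) \<cdot> (c (x \<cdot> y) \<cdot> z) = z \<cdot> c x"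
  using meet_rotate[of "c (x \<cdot> c y)" "c (x \<cdot> y)" z] huntington[of x y] by simp

lemma huntington_commuted_meet:
  "x \<in> B \<Longrightarrow> y \<in> B \<Longrightarrow> z \<in> B \<Longrightarrow> c (x \<cdot> y) \<cdot> (c (x \<cdot> c y) \<cdot> z) = z \<cdot> c x"
  using meet_rotate[of "c (x \<cdot> y)" "c (x \<cdot> c y)" z] huntington_commuted[of x y] by simp

lemma meet_c_right_exchange:
  assumes "x \<in> B" "y \<in> B" "z \<in> B"
  shows "(c (x \<cdot> y) \<cdot> z) \<cdot> c x = c x \<cdot> (z \<cdot> c (x \<cdot> y))"
proof -
  have "c x \<cdot> (z \<cdot> c (x \<cdot> y)) = c (x \<cdot> y) \<cdot> (z \<cdot> c x)"
    using meet_rotate[of "c x" z "c (x \<cdot> y)"] assms by simp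
  also have "\<dots> = c (x \<cdot> y) \<cdot> (c (x \<cdot> c y) \<cdot> (c (x \<cdot> y) \<cdot> z))"
    using huntington_meet[of x y z] assms by simp
  also have "\<dots> = (c (x \<cdot> y) \<cdot> z) \<cdot> c x"
    using huntington_commuted_meet[of x y "c (x \<cdot> y) \<cdot> z"] assms by simp
  finally show ?thesis by simp
qed

lemma meet_expand_right:
  assumes "x \<in> B" "y \<in> B"
  shows "c (c x \<cdot> (y \<cdot> c (y \<cdot> x))) \<cdot> y = y \<cdot> x"
proof -
  have "y \<cdot> x = c (c (y \<cdot> x))" using assms by simp
  also have "\<dots> = c (c (y \<cdot> x) \<cdot> (y \<cdot> c x)) \<cdot> c (c (y \<cdot> x) \<cdot> c (y \<cdot> c x))"
    using huntington[of "c (y \<cdot> x)" "y \<cdot> c x"] assms by simp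
  also have "c (c (y \<cdot> x) \<cdot> c (y \<cdot> c x)) = y"
    using huntington[of y x, symmetric] assms by simp
  also have "c (y \<cdot> x) \<cdot> (y \<cdot> c x) = c x \<cdot> (y \<cdot> c (y \<cdot> x))"
    using meet_rotate[of "c (y \<cdot> x)" y "c x"] assms by simp
  finally show ?thesis by simp
qed

lemma meet_expand_left:
  assumes "x \<in> B" "y \<in> B"
  shows "x \<cdot> c (c y \<cdot> (x \<cdot> c (x \<cdot> y))) = x \<cdot> y"
proof -
  have "x \<cdot> y = c (c (x \<cdot> y))" using assms by simp
  also have "\<dots> = c (c (x \<cdot> y) \<cdot> c (x \<cdot> c y)) \<cdot> c (c (x \<cdot> y) \<cdot> (x \<cdot> c y))"
    using huntington_commuted[of "c (x \<cdot> y)" "x \<cdot> c y"] assms by simp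
  also have "c (c (x \<cdot> y) \<cdot> c (x \<cdot> c y)) = x"
    using huntington[of x y, symmetric] assms by simp
  also have "c (x \<cdot> y) \<cdot> (x \<cdot> c y) = c y \<cdot> (x \<cdot> c (x \<cdot> y))"
    using meet_rotate[of "c (x \<cdot> y)" x "c y"] assms by simp
  finally show ?thesis by simp
qed

lemma meet_commute_meet_right: "x \<in> B \<Longrightarrow> y \<in> B \<Longrightarrow> (y \<cdot> x) \<cdot> x = x \<cdot> (y \<cdot> x)"
  using meet_c_right_exchange[of "c x" "y \<cdot> c (y \<cdot> x)" y] meet_expand_right[of x y]
    meet_expand_left[of y x]
  by simp

lemma meet_commute_meet_left: "x \<in> B \<Longrightarrow> y \<in> B \<Longrightarrow> (y \<cdot> x) \<cdot> y = y \<cdot> (y \<cdot> x)"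
  using meet_commute_meet_right[of y "c (c x \<cdot> (y \<cdot> c (y \<cdot> x)))"]
  by (simp add: meet_expand_right)

lemma meet_meet_shift:
  "x \<in> B \<Longrightarrow> y \<in> B \<Longrightarrow> z \<in> B \<Longrightarrow> (x \<cdot> y) \<cdot> (y \<cdot> z) = y \<cdot> ((x \<cdot> y) \<cdot> z)"
  using meet_rotate[of "x \<cdot> y" y z] meet_commute_meet_right[of y x]
    meet_rotate[of z "x \<cdot> y" y]
  by simp

lemma c_meet_left_commute:
  "x \<in> B \<Longrightarrow> y \<in> B \<Longrightarrow> z \<in> B \<Longrightarrow> c (x \<cdot> y) \<cdot> (c x \<cdot> z) = c x \<cdot> (c (x \<cdot> y) \<cdot> z)"
  using meet_meet_shift[of "c (x \<cdot> c y)" "c (x \<cdot> y)" z] huntington_commuted[of x y] by simp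

lemma meet_left_absorb_commute:
  assumes "x \<in> B" "y \<in> B"
  shows "x \<cdot> (y \<cdot> x) = x \<cdot> (x \<cdot> y)"
proof -
  \<comment> \<open>Naming \<open>c x\<close> keeps the simplifier from collapsing \<open>c (c x)\<close> in the calculation.\<close>
  define u where "u = c x"
  have u: "u \<in> B" "c u = x"
    using assms by (simp_all add: u_def)
  have "c u \<cdot> (y \<cdot> c u) = c u \<cdot> (c (u \<cdot> c y) \<cdot> (c (u \<cdot> y) \<cdot> y))"
    using huntington_meet[of u y y] u(1) assms by simp
  also have "\<dots> = c (u \<cdot> c y) \<cdot> (c u \<cdot> (c (u \<cdot> y) \<cdot> y))"
    using c_meet_left_commute[of u "c y" "c (u \<cdot> y) \<cdot> y"] u(1) assms by simp
  also have "\<dots> = c (u \<cdot> c y) \<cdot> (c (u \<cdot> y) \<cdot> (c u \<cdot> y))"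
    using c_meet_left_commute[of u y y] u(1) assms by simp
  also have "\<dots> = (c u \<cdot> y) \<cdot> c u"
    using huntington_meet[of u y "c u \<cdot> y"] u(1) assms by simp
  also have "\<dots> = c u \<cdot> (c u \<cdot> y)"
    using meet_commute_meet_left[of y "c u"] u(1) assms by simp
  finally show ?thesis
    unfolding u(2) .
qed

lemma c_commute_meet_c_meet:
  assumes "x \<in> B" "y \<in> B" "z \<in> B"
  shows "(x \<cdot> c (y \<cdot> z)) \<cdot> c y = c y \<cdot> (x \<cdot> c (y \<cdot> z))"
proof -
  have "(x \<cdot> c (y \<cdot> z)) \<cdot> c y = c (y \<cdot> c z) \<cdot> (c (y \<cdot> z) \<cdot> (x \<cdot> c (y \<cdot> z)))"
    using huntington_meet[of y z "x \<cdot> c (y \<cdot> z)"] assms by simp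
  also have "\<dots> = c (y \<cdot> c z) \<cdot> (c (y \<cdot> z) \<cdot> (c (y \<cdot> z) \<cdot> x))"
    using meet_left_absorb_commute[of "c (y \<cdot> z)" x] assms by simp
  also have "\<dots> = (c (y \<cdot> z) \<cdot> x) \<cdot> c y"
    using huntington_meet[of y z "c (y \<cdot> z) \<cdot> x"] assms by simp
  also have "\<dots> = c y \<cdot> (x \<cdot> c (y \<cdot> z))"
    using meet_c_right_exchange[of y z x] assms by simp
  finally show ?thesis .
qed

lemma c_meet_commute:
  assumes "x \<in> B" "y \<in> B"
  shows "c x \<cdot> c y = c y \<cdot> c x"
proof -
  have "c (x \<cdot> c (y \<cdot> y)) \<cdot> c (y \<cdot> (y \<cdot> x)) = c x"
    using huntington_commuted[of x "y \<cdot> y"] meet_rotate[of x y y] assms by simp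
  then show ?thesis
    using c_commute_meet_c_meet[of "c (x \<cdot> c (y \<cdot> y))" y "y \<cdot> x"] assms by simp
qed

lemma meet_commute: "x \<in> B \<Longrightarrow> y \<in> B \<Longrightarrow> x \<cdot> y = y \<cdot> x"
  using c_meet_commute[of "c x" "c y"] by simp

end

theorem corollary7p7:
  fixes B :: "'a set" and meet :: "'a \<Rightarrow> 'a \<Rightarrow> 'a" and c :: "'a \<Rightarrow> 'a"
  assumes closed_meet: "\<And>x y. x \<in> B \<Longrightarrow> y \<in> B \<Longrightarrow> meet x y \<in> B"
    and closed_c: "\<And>x. x \<in> B \<Longrightarrow> c x \<in> B"
    and ax1: "\<And>x y z. x \<in> B \<Longrightarrow> y \<in> B \<Longrightarrow> z \<in> B \<Longrightarrow>
               meet x (meet y z) = meet z (meet y x)"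
    and ax2: "\<And>x. x \<in> B \<Longrightarrow> c (c x) = x"
    and ax3: "\<And>x y. x \<in> B \<Longrightarrow> y \<in> B \<Longrightarrow>
               c x = meet (c (meet x y)) (c (meet x (c y)))"
  shows "\<forall>x\<in>B. \<forall>y\<in>B. meet x y = meet y x"
proof -
  interpret huntington_meet_algebra B meet c
    by unfold_locales (fact assms)+
  show ?thesis using meet_commute by blast
qed

end
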